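(* For all integers $k$ and $M$, the series below converges absolutely and $$\sum_{n=-\infty}^{M} q^{2n}\cos_q\!\big(q^{2(k+n)}\big)=q^{-2k}\sin_q\!\big(q^{2(k+M)}\big).$$ Equivalently, with $\Theta(q^{2n}-q^{2M})=1$ for $n\le M$ and $0$ for $n>M$, one has $N_q\sum_{n\in\mathbb{Z}}q^{2n}\cos_q(q^{2(k+n)})\Theta(q^{2n}-q^{2M})=N_q\,q^{-2k}\sin_q(q^{2(k+M)})$ for any constant $N_q$.
   Context: Fix a real number $q>1$ and let $(q^{-2};q^{-2})_n=\prod_{j=1}^n(1-q^{-2j})$. Define $\sin_q(z)=\sum_{n\ge0}(-1)^nq^{-2n(n+1)}\frac{z^{2n+1}}{(q^{-2};q^{-2})_{2n+1}}$ and $\cos_q(z)=\sum_{n\ge0}(-1)^nq^{-2n(n+1)}\frac{z^{2n}}{(q^{-2};q^{-2})_{2n}}$. *)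

theory Defs
  imports "HOL-Analysis.Analysis"
begin

definition qpoch :: "real \<Rightarrow> nat \<Rightarrow> real" where
  "qpoch q n = (\<Prod>j=1..n. 1 - q powi (-2 * int j))"

definition sin_q :: "real \<Rightarrow> real \<Rightarrow> real" where
  "sin_q q z = (\<Sum>n. (-1)^n * q powi (-2 * int n * (int n + 1)) * z ^ (2*n+1) / qpoch q (2*n+1))"

definition cos_q :: "real \<Rightarrow> real \<Rightarrow> real" where
  "cos_q q z = (\<Sum>n. (-1)^n * q powi (-2 * int n * (int n + 1)) * z ^ (2*n) / qpoch q (2*n))"

end

theory Submission
  imports Defs
begin

(* Write p = q^-2 in (0,1). Since (p;p)_(2n+1) = (p;p)_(2n) (1 - p^(2n+1)), the q-sine
   satisfies the difference equation sin_q(w) - sin_q(p w) = w cos_q(w). Substituting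
   n = M - m, the n-th term of the series becomes q^-2k w_m cos_q(w_m) with the geometric
   sequence w_m = q^(2(k+M)) p^m, so the series telescopes to q^-2k sin_q(w_0), because
   sin_q(w) = O(w) near 0. Absolute convergence follows since cos_q is bounded near 0
   and w_m decays geometrically. *)

(* sin_q, cos_q and (q^-2;q^-2)_n in the base p = q^-2, so that all exponents are natural. *)

definition ppoch :: "real \<Rightarrow> nat \<Rightarrow> real" where
  "ppoch p n = (\<Prod>j=1..n. 1 - p ^ j)"

definition psin_term :: "real \<Rightarrow> real \<Rightarrow> nat \<Rightarrow> real" where
  "psin_term p w n = (-1) ^ n * p ^ (n * (n + 1)) * w ^ (2 * n + 1) / ppoch p (2 * n + 1)"

definition pcos_term :: "real \<Rightarrow> real \<Rightarrow> nat \<Rightarrow> real" where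
  "pcos_term p w n = (-1) ^ n * p ^ (n * (n + 1)) * w ^ (2 * n) / ppoch p (2 * n)"

definition psin :: "real \<Rightarrow> real \<Rightarrow> real" where
  "psin p w = (\<Sum>n. psin_term p w n)"

definition pcos :: "real \<Rightarrow> real \<Rightarrow> real" where
  "pcos p w = (\<Sum>n. pcos_term p w n)"

lemma ppoch_Suc: "ppoch p (Suc n) = ppoch p n * (1 - p ^ Suc n)"
  unfolding ppoch_def by (simp add: prod.nat_ivl_Suc')

lemma ppoch_ge_power:
  assumes "0 \<le> p" "p \<le> 1"
  shows "(1 - p) ^ n \<le> ppoch p n"
proof -
  have "(1 - p) ^ n = (\<Prod>j=1..n. 1 - p)" by simp
  also have "\<dots> \<le> ppoch p n"
    unfolding ppoch_def
  proof (rule prod_mono)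
    fix j assume "j \<in> {1..n}"
    then have "p ^ j \<le> p ^ 1" using assms by (intro power_decreasing) auto
    then show "0 \<le> 1 - p \<and> 1 - p \<le> 1 - p ^ j" using assms by simp
  qed
  finally show ?thesis .
qed

lemma ppoch_pos:
  assumes "0 \<le> p" "p < 1"
  shows "0 < ppoch p n"
proof -
  have "0 < (1 - p) ^ n"
    using assms by simp
  also have "\<dots> \<le> ppoch p n"
    using assms by (intro ppoch_ge_power) auto
  finally show ?thesis .
qed

lemma summable_pronic_power:
  fixes p R :: real
  assumes "0 \<le> p" "p < 1"
  shows "summable (\<lambda>n. p ^ (n * (n + 1)) * R ^ (2 * n))"
proof -
  define r where "r n = p ^ Suc n * R\<^sup>2" for n
  have r_nonneg: "0 \<le> r n" for n
    unfolding r_def using assms by simp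
  have "r \<longlonglongrightarrow> 0"
    unfolding r_def using assms
    by (intro tendsto_mult_left_zero LIMSEQ_Suc[OF LIMSEQ_power_zero]) auto
  then have "\<forall>\<^sub>F n in sequentially. r n < 1/2"
    by (rule order_tendstoD) simp
  then have "\<forall>\<^sub>F n in sequentially. norm (p ^ (n * (n + 1)) * R ^ (2 * n)) \<le> (1/2) ^ n"
  proof eventually_elim
    case (elim n)
    have "p ^ (n * (n + 1)) * R ^ (2 * n) = r n ^ n"
      unfolding r_def power_mult_distrib power_mult [symmetric] by (simp add: mult.commute)
    moreover have "r n ^ n \<le> (1/2) ^ n"
      using elim r_nonneg by (intro power_mono) (auto simp: less_imp_le)
    ultimately show ?case using r_nonneg by simp
  qed
  then show ?thesis
    by (rule summable_comparison_test_ev) (simp add: summable_geometric)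
qed

lemma abs_pseries_term_le:
  assumes "0 \<le> p" "p < 1"
  shows "\<bar>(-1) ^ n * p ^ m * w ^ j / ppoch p j\<bar> \<le> p ^ m * (\<bar>w\<bar> / (1 - p)) ^ j"
proof -
  have "\<bar>(-1) ^ n * p ^ m * w ^ j / ppoch p j\<bar> = p ^ m * \<bar>w\<bar> ^ j / ppoch p j"
    using assms ppoch_pos[OF assms, of j] by (simp add: abs_mult power_abs)
  also have "\<dots> \<le> p ^ m * \<bar>w\<bar> ^ j / (1 - p) ^ j"
    using assms ppoch_ge_power[of p j] ppoch_pos[OF assms, of j] by (intro divide_left_mono) auto
  finally show ?thesis by (simp add: power_divide)
qed

lemma abs_pcos_term_le:
  assumes "0 \<le> p" "p < 1" "\<bar>w\<bar> \<le> W"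
  shows "\<bar>pcos_term p w n\<bar> \<le> p ^ (n * (n + 1)) * (W / (1 - p)) ^ (2 * n)"
proof -
  have "(\<bar>w\<bar> / (1 - p)) ^ (2 * n) \<le> (W / (1 - p)) ^ (2 * n)"
    using assms by (intro power_mono divide_right_mono) auto
  then have "p ^ (n * (n + 1)) * (\<bar>w\<bar> / (1 - p)) ^ (2 * n)
      \<le> p ^ (n * (n + 1)) * (W / (1 - p)) ^ (2 * n)"
    using assms by (intro mult_left_mono) auto
  then show ?thesis
    unfolding pcos_term_def using abs_pseries_term_le[OF assms(1,2)] order_trans by blast
qed

lemma abs_psin_term_le:
  assumes "0 \<le> p" "p < 1" "\<bar>w\<bar> \<le> W"
  shows "\<bar>psin_term p w n\<bar> \<le> \<bar>w\<bar> / (1 - p) * (p ^ (n * (n + 1)) * (W / (1 - p)) ^ (2 * n))"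
proof -
  have "\<bar>psin_term p w n\<bar> \<le> p ^ (n * (n + 1)) * (\<bar>w\<bar> / (1 - p)) ^ (2 * n + 1)"
    unfolding psin_term_def by (rule abs_pseries_term_le[OF assms(1,2)])
  also have "\<dots> = \<bar>w\<bar> / (1 - p) * (p ^ (n * (n + 1)) * (\<bar>w\<bar> / (1 - p)) ^ (2 * n))"
    by simp
  also have "\<dots> \<le> \<bar>w\<bar> / (1 - p) * (p ^ (n * (n + 1)) * (W / (1 - p)) ^ (2 * n))"
    using assms by (intro mult_left_mono power_mono divide_right_mono) auto
  finally show ?thesis .
qed

lemma summable_pcos_term:
  assumes "0 \<le> p" "p < 1"
  shows "summable (pcos_term p w)"
  by (rule summable_comparison_test' [OF summable_pronic_power [OF assms]])
    (use abs_pcos_term_le[OF assms order_refl] in simp)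

lemma summable_psin_term:
  assumes "0 \<le> p" "p < 1"
  shows "summable (psin_term p w)"
proof (rule summable_comparison_test')
  let ?c = "\<bar>w\<bar> / (1 - p)"
  show "summable (\<lambda>n. ?c * (p ^ (n * (n + 1)) * ?c ^ (2 * n)))"
    by (intro summable_mult summable_pronic_power assms)
  show "norm (psin_term p w n) \<le> ?c * (p ^ (n * (n + 1)) * ?c ^ (2 * n))" for n
    using abs_psin_term_le[OF assms order_refl] by simp
qed

lemma pcos_bounded:
  assumes "0 \<le> p" "p < 1"
  obtains K where "\<And>w. \<bar>w\<bar> \<le> W \<Longrightarrow> \<bar>pcos p w\<bar> \<le> K"
proof
  fix w assume w: "\<bar>w\<bar> \<le> W"
  show "\<bar>pcos p w\<bar> \<le> (\<Sum>n. p ^ (n * (n + 1)) * (W / (1 - p)) ^ (2 * n))"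
    unfolding pcos_def
    by (rule norm_suminf_le [where 'a = real, unfolded real_norm_def])
      (use abs_pcos_term_le[OF assms w] summable_pronic_power[OF assms] in auto)
qed

lemma psin_bounded_linear:
  assumes "0 \<le> p" "p < 1"
  obtains K where "\<And>w. \<bar>w\<bar> \<le> W \<Longrightarrow> \<bar>psin p w\<bar> \<le> K * \<bar>w\<bar>"
proof
  let ?K = "(\<Sum>n. p ^ (n * (n + 1)) * (W / (1 - p)) ^ (2 * n))"
  fix w assume w: "\<bar>w\<bar> \<le> W"
  have "\<bar>psin p w\<bar> \<le> (\<Sum>n. \<bar>w\<bar> / (1 - p) * (p ^ (n * (n + 1)) * (W / (1 - p)) ^ (2 * n)))"
    unfolding psin_def
    by (rule norm_suminf_le [where 'a = real, unfolded real_norm_def])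
      (use abs_psin_term_le[OF assms w] summable_pronic_power[OF assms] in \<open>auto intro: summable_mult\<close>)
  also have "\<dots> = \<bar>w\<bar> / (1 - p) * ?K"
    by (rule suminf_mult[OF summable_pronic_power[OF assms]])
  also have "\<dots> = ?K / (1 - p) * \<bar>w\<bar>"
    by simp
  finally show "\<bar>psin p w\<bar> \<le> ?K / (1 - p) * \<bar>w\<bar>" .
qed

lemma psin_term_diff:
  assumes "0 \<le> p" "p < 1"
  shows "psin_term p w n - psin_term p (p * w) n = w * pcos_term p w n"
proof -
  define c where "c = (-1) ^ n * p ^ (n * (n + 1)) * w ^ (2 * n + 1)"
  define t where "t = p ^ Suc (2 * n)"
  define Q where "Q = ppoch p (2 * n)"
  have "t < 1"
    unfolding t_def using assms power_less_one_iff[of p "Suc (2 * n)"] by simp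
  have "Q \<noteq> 0"
    unfolding Q_def using ppoch_pos[OF assms, of "2 * n"] by simp
  have "psin_term p w n - psin_term p (p * w) n = c / (Q * (1 - t)) - t * c / (Q * (1 - t))"
    unfolding psin_term_def c_def t_def Q_def by (simp add: ppoch_Suc power_mult_distrib)
  also have "\<dots> = (1 - t) * c / ((1 - t) * Q)"
    by (simp add: diff_divide_distrib [symmetric] algebra_simps)
  also have "\<dots> = c / Q"
    using \<open>t < 1\<close> by simp
  also have "\<dots> = w * pcos_term p w n"
    unfolding c_def Q_def pcos_term_def by simp
  finally show ?thesis .
qed

lemma psin_diff:
  assumes "0 \<le> p" "p < 1"
  shows "psin p w - psin p (p * w) = w * pcos p w"
proof -
  have "psin p w - psin p (p * w) = (\<Sum>n. psin_term p w n - psin_term p (p * w) n)"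
    unfolding psin_def
    using summable_psin_term[OF assms] by (simp add: suminf_diff)
  also have "\<dots> = w * pcos p w"
    unfolding psin_term_diff[OF assms] pcos_def
    by (intro suminf_mult summable_pcos_term assms)
  finally show ?thesis .
qed

lemma pcos_geometric_sums_psin:
  assumes "0 \<le> p" "p < 1"
  shows "(\<lambda>m. w * p ^ m * pcos p (w * p ^ m)) sums psin p w"
proof -
  obtain K where K: "\<And>v. \<bar>v\<bar> \<le> \<bar>w\<bar> \<Longrightarrow> \<bar>psin p v\<bar> \<le> K * \<bar>v\<bar>"
    using psin_bounded_linear[OF assms] by blast
  have "(\<lambda>m. psin p (w * p ^ m)) \<longlonglongrightarrow> 0"
  proof (rule Lim_null_comparison)
    show "\<forall>\<^sub>F m in sequentially. norm (psin p (w * p ^ m)) \<le> K * \<bar>w\<bar> * p ^ m"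
    proof (intro always_eventually allI)
      fix m
      have "\<bar>w * p ^ m\<bar> \<le> \<bar>w\<bar>"
        using assms by (simp add: abs_mult mult_left_le power_le_one)
      then have "\<bar>psin p (w * p ^ m)\<bar> \<le> K * \<bar>w * p ^ m\<bar>"
        by (rule K)
      then show "norm (psin p (w * p ^ m)) \<le> K * \<bar>w\<bar> * p ^ m"
        using assms by (simp add: abs_mult mult.assoc)
    qed
    show "(\<lambda>m. K * \<bar>w\<bar> * p ^ m) \<longlonglongrightarrow> 0"
      using assms by (intro tendsto_mult_right_zero LIMSEQ_power_zero) auto
  qed
  then have "(\<lambda>m. psin p (w * p ^ m) - psin p (w * p ^ Suc m)) sums (psin p (w * p ^ 0) - 0)"
    by (rule telescope_sums')
  moreover have "psin p (w * p ^ m) - psin p (w * p ^ Suc m) = w * p ^ m * pcos p (w * p ^ m)" for m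
    using psin_diff[OF assms, of "w * p ^ m"] by (simp add: mult.left_commute)
  ultimately show ?thesis by simp
qed

lemma summable_abs_pcos_geometric:
  assumes "0 \<le> p" "p < 1"
  shows "summable (\<lambda>m. \<bar>w * p ^ m * pcos p (w * p ^ m)\<bar>)"
proof -
  obtain K where K: "\<And>v. \<bar>v\<bar> \<le> \<bar>w\<bar> \<Longrightarrow> \<bar>pcos p v\<bar> \<le> K"
    using pcos_bounded[OF assms] by blast
  show ?thesis
  proof (rule summable_comparison_test')
    show "summable (\<lambda>m. \<bar>w\<bar> * K * p ^ m)"
      using assms by (intro summable_mult summable_geometric) auto
    fix m
    have "\<bar>pcos p (w * p ^ m)\<bar> \<le> K"
      using K assms by (simp add: abs_mult mult_left_le power_le_one)
    then have "\<bar>w\<bar> * p ^ m * \<bar>pcos p (w * p ^ m)\<bar> \<le> \<bar>w\<bar> * p ^ m * K"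
      using assms by (intro mult_left_mono) auto
    then show "norm \<bar>w * p ^ m * pcos p (w * p ^ m)\<bar> \<le> \<bar>w\<bar> * K * p ^ m"
      using assms by (simp add: abs_mult mult.commute mult.left_commute)
  qed
qed

lemma power_int_minus_double: "(q :: real) powi (-2 * int j) = inverse (q\<^sup>2) ^ j"
proof -
  have "q powi (-2 * int j) = inverse (q powi int (2 * j))"
    by (simp add: power_int_minus [symmetric])
  also have "\<dots> = inverse (q\<^sup>2) ^ j"
    by (simp only: power_int_of_nat) (simp add: power_mult power_inverse)
  finally show ?thesis .
qed

lemma power_int_diff_double:
  fixes q :: real
  assumes "q \<noteq> 0"
  shows "q powi (a - 2 * int m) = q powi a * inverse (q\<^sup>2) ^ m"
proof -
  have "q powi (a - 2 * int m) = q powi (a + (-2 * int m))"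
    by simp
  also have "\<dots> = q powi a * inverse (q\<^sup>2) ^ m"
    by (simp only: power_int_add[OF disjI1[OF assms]] power_int_minus_double)
  finally show ?thesis .
qed

lemma qpoch_eq_ppoch: "qpoch q n = ppoch (inverse (q\<^sup>2)) n"
  unfolding qpoch_def ppoch_def by (simp only: power_int_minus_double)

lemma sin_q_eq_psin: "sin_q q w = psin (inverse (q\<^sup>2)) w"
proof -
  have "-2 * int n * (int n + 1) = -2 * int (n * (n + 1))" for n
    by (simp add: algebra_simps)
  then show ?thesis
    unfolding sin_q_def psin_def psin_term_def by (simp only: power_int_minus_double qpoch_eq_ppoch)
qed

lemma cos_q_eq_pcos: "cos_q q w = pcos (inverse (q\<^sup>2)) w"
proof -
  have "-2 * int n * (int n + 1) = -2 * int (n * (n + 1))" for n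
    by (simp add: algebra_simps)
  then show ?thesis
    unfolding cos_q_def pcos_def pcos_term_def by (simp only: power_int_minus_double qpoch_eq_ppoch)
qed

lemma bij_betw_int_atMost: "bij_betw (\<lambda>m::nat. M - int m) UNIV {..M}"
  by (rule bij_betw_byWitness[where f' = "\<lambda>n. nat (M - n)"]) auto

lemma cos_q_series_term_reindex:
  fixes q :: real and k M :: int
  assumes "q \<noteq> 0"
  defines "p \<equiv> inverse (q\<^sup>2)" and "Z \<equiv> q powi (2 * (k + M))"
  shows "q powi (2 * (M - int m)) * cos_q q (q powi (2 * (k + (M - int m))))
       = q powi (-2 * k) * (Z * p ^ m * pcos p (Z * p ^ m))"
proof -
  have exponents: "2 * (k + (M - int m)) = 2 * (k + M) - 2 * int m"
                  "2 * (M - int m) = 2 * M - 2 * int m"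
    by simp_all
  have "q powi (2 * M) = q powi (-2 * k) * Z"
    using power_int_add[of q "-2 * k" "2 * (k + M)"] assms(1) unfolding Z_def by simp
  then show ?thesis
    unfolding exponents cos_q_eq_pcos power_int_diff_double[OF assms(1)] Z_def p_def
    by (simp add: mult_ac)
qed

theorem mainTheorem8:
  fixes q :: real and k M :: int
  assumes "q > 1"
  shows "(\<lambda>n. \<bar>q powi (2*n) * cos_q q (q powi (2*(k+n)))\<bar>) summable_on {..M}
       \<and> ((\<lambda>n. q powi (2*n) * cos_q q (q powi (2*(k+n))))
            has_sum (q powi (-2*k) * sin_q q (q powi (2*(k+M))))) {..M}"
proof -
  define p where "p = inverse (q\<^sup>2)"
  define A where "A = q powi (-2*k)"
  define Z where "Z = q powi (2*(k+M))"
  define g where "g m = Z * p ^ m * pcos p (Z * p ^ m)" for m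
  have p: "0 \<le> p" "p < 1"
    unfolding p_def using assms by (auto simp: inverse_less_1_iff)
  have "((\<lambda>m. A * g m) has_sum A * psin p Z) UNIV"
    unfolding g_def using pcos_geometric_sums_psin[OF p] summable_abs_pcos_geometric[OF p]
    by (intro has_sum_cmult_right norm_summable_imp_has_sum) auto
  moreover have "(\<lambda>m. \<bar>A * g m\<bar>) summable_on UNIV"
    unfolding g_def using summable_abs_pcos_geometric[OF p]
    by (intro summable_nonneg_imp_summable_on) (auto simp: abs_mult intro: summable_mult)
  ultimately show ?thesis
    unfolding has_sum_reindex_bij_betw[OF bij_betw_int_atMost, symmetric]
      summable_on_reindex_bij_betw[OF bij_betw_int_atMost, symmetric]
    using cos_q_series_term_reindex[of q] assms
    by (simp add: A_def Z_def p_def g_def sin_q_eq_psin)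
qed

end
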